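(* If $n\ge2$ is even, there are a locally finite specular $n$-distributive variety and a locally finite specular $n$-alvin variety, neither of which is $(n-1)$-distributive. If $n\ge2$, there is a locally finite specular $n$-directed-distributive variety which is not $(n-1)$-directed-distributive.
   Context: Ternary terms $t_0,\dots,t_n$ with $t_0(x,y,z)=x$, $t_n(x,y,z)=z$, $t_h(x,y,x)=x$ for all $h$ are J\'onsson terms if $t_h(x,x,z)=t_{h+1}(x,x,z)$ for even $h$ and $t_h(x,z,z)=t_{h+1}(x,z,z)$ for odd $h$ ($0\le h<n$); alvin terms if even/odd are exchanged; directed J\'onsson terms if $t_h(x,z,z)=t_{h+1}(x,x,z)$ for all $0\le h<n$. A variety is specular $n$-distributive (specular $n$-alvin, specular $n$-directed-distributive) if it has J\'onsson (alvin, directed J\'onsson) terms $t_0,\dots,t_n$ that also satisfy $t_i(x,y,z)=t_{n-i}(z,y,x)$ for all $0\le i\le n$. $n$-distributive and $n$-directed-distributive are defined likewise without the specularity equations. *)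

theory Defs
  imports Main
begin

text \<open>Terms over a signature with operation symbols of type 'f; variables are natural numbers.
  Variable 0 is x, 1 is y, 2 is z.\<close>

datatype 'f trm = Var nat | Fn 'f "'f trm list"

fun vars :: "'f trm \<Rightarrow> nat set" where
  "vars (Var n) = {n}"
| "vars (Fn f ts) = (\<Union>t\<in>set ts. vars t)"

fun subst :: "(nat \<Rightarrow> 'f trm) \<Rightarrow> 'f trm \<Rightarrow> 'f trm" where
  "subst \<sigma> (Var n) = \<sigma> n"
| "subst \<sigma> (Fn f ts) = Fn f (map (subst \<sigma>) ts)"

inductive wf_trm :: "('f \<Rightarrow> nat) \<Rightarrow> 'f trm \<Rightarrow> bool" for ar where
  wf_var: "wf_trm ar (Var n)"
| wf_fn: "length ts = ar f \<Longrightarrow> (\<forall>t\<in>set ts. wf_trm ar t) \<Longrightarrow> wf_trm ar (Fn f ts)"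

text \<open>A variety presented by a signature (arity function ar) and a set E of
  identities; eqc ar E s t means that the identity s = t holds in the variety,
  i.e. is derivable in equational logic from E (Birkhoff).\<close>
inductive eqc :: "('f \<Rightarrow> nat) \<Rightarrow> ('f trm \<times> 'f trm) set \<Rightarrow> 'f trm \<Rightarrow> 'f trm \<Rightarrow> bool"
  for ar E where
  eqc_ax: "(s, t) \<in> E \<Longrightarrow> eqc ar E s t"
| eqc_refl: "wf_trm ar t \<Longrightarrow> eqc ar E t t"
| eqc_sym: "eqc ar E s t \<Longrightarrow> eqc ar E t s"
| eqc_trans: "eqc ar E s t \<Longrightarrow> eqc ar E t u \<Longrightarrow> eqc ar E s u"
| eqc_subst: "eqc ar E s t \<Longrightarrow> (\<forall>n. wf_trm ar (\<sigma> n)) \<Longrightarrow> eqc ar E (subst \<sigma> s) (subst \<sigma> t)"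
| eqc_cong: "length ss = ar f \<Longrightarrow> length ts = ar f \<Longrightarrow> (\<forall>i<ar f. eqc ar E (ss ! i) (ts ! i))
             \<Longrightarrow> eqc ar E (Fn f ss) (Fn f ts)"

definition variety :: "('f \<Rightarrow> nat) \<Rightarrow> ('f trm \<times> 'f trm) set \<Rightarrow> bool" where
  "variety ar E \<longleftrightarrow> (\<forall>(s, t)\<in>E. wf_trm ar s \<and> wf_trm ar t)"

text \<open>Locally finite: every free algebra on finitely many (k) generators is finite,
  i.e. the terms in variables 0..k-1 modulo the equational theory form a finite set.\<close>
definition locally_finite :: "('f \<Rightarrow> nat) \<Rightarrow> ('f trm \<times> 'f trm) set \<Rightarrow> bool" where
  "locally_finite ar E \<longleftrightarrow>
     (\<forall>k. finite ((\<lambda>t. {s. wf_trm ar s \<and> vars s \<subseteq> {..<k} \<and> eqc ar E s t})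
                   ` {t. wf_trm ar t \<and> vars t \<subseteq> {..<k}}))"

abbreviation vX :: "'f trm" where "vX \<equiv> Var 0"
abbreviation vY :: "'f trm" where "vY \<equiv> Var 1"
abbreviation vZ :: "'f trm" where "vZ \<equiv> Var 2"

definition ternary :: "('f \<Rightarrow> nat) \<Rightarrow> 'f trm \<Rightarrow> bool" where
  "ternary ar t \<longleftrightarrow> wf_trm ar t \<and> vars t \<subseteq> {0, 1, 2}"

definition app3 :: "'f trm \<Rightarrow> 'f trm \<Rightarrow> 'f trm \<Rightarrow> 'f trm \<Rightarrow> 'f trm" where
  "app3 t a b c = subst (\<lambda>i. if i = 0 then a else if i = 1 then b else if i = 2 then c else Var i) t"

definition base_terms :: "('f \<Rightarrow> nat) \<Rightarrow> ('f trm \<times> 'f trm) set \<Rightarrow> nat \<Rightarrow> (nat \<Rightarrow> 'f trm) \<Rightarrow> bool" where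
  "base_terms ar E n t \<longleftrightarrow>
     (\<forall>h\<le>n. ternary ar (t h)) \<and>
     eqc ar E (t 0) vX \<and> eqc ar E (t n) vZ \<and>
     (\<forall>h\<le>n. eqc ar E (app3 (t h) vX vY vX) vX)"

definition jonsson_terms :: "('f \<Rightarrow> nat) \<Rightarrow> ('f trm \<times> 'f trm) set \<Rightarrow> nat \<Rightarrow> (nat \<Rightarrow> 'f trm) \<Rightarrow> bool" where
  "jonsson_terms ar E n t \<longleftrightarrow> base_terms ar E n t \<and>
     (\<forall>h<n. (even h \<longrightarrow> eqc ar E (app3 (t h) vX vX vZ) (app3 (t (Suc h)) vX vX vZ)) \<and>
            (odd h \<longrightarrow> eqc ar E (app3 (t h) vX vZ vZ) (app3 (t (Suc h)) vX vZ vZ)))"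

definition alvin_terms :: "('f \<Rightarrow> nat) \<Rightarrow> ('f trm \<times> 'f trm) set \<Rightarrow> nat \<Rightarrow> (nat \<Rightarrow> 'f trm) \<Rightarrow> bool" where
  "alvin_terms ar E n t \<longleftrightarrow> base_terms ar E n t \<and>
     (\<forall>h<n. (odd h \<longrightarrow> eqc ar E (app3 (t h) vX vX vZ) (app3 (t (Suc h)) vX vX vZ)) \<and>
            (even h \<longrightarrow> eqc ar E (app3 (t h) vX vZ vZ) (app3 (t (Suc h)) vX vZ vZ)))"

definition directed_jonsson_terms :: "('f \<Rightarrow> nat) \<Rightarrow> ('f trm \<times> 'f trm) set \<Rightarrow> nat \<Rightarrow> (nat \<Rightarrow> 'f trm) \<Rightarrow> bool" where
  "directed_jonsson_terms ar E n t \<longleftrightarrow> base_terms ar E n t \<and>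
     (\<forall>h<n. eqc ar E (app3 (t h) vX vZ vZ) (app3 (t (Suc h)) vX vX vZ))"

definition specular :: "('f \<Rightarrow> nat) \<Rightarrow> ('f trm \<times> 'f trm) set \<Rightarrow> nat \<Rightarrow> (nat \<Rightarrow> 'f trm) \<Rightarrow> bool" where
  "specular ar E n t \<longleftrightarrow> (\<forall>i\<le>n. eqc ar E (t i) (app3 (t (n - i)) vZ vY vX))"

definition n_distributive where
  "n_distributive ar E n \<longleftrightarrow> (\<exists>t. jonsson_terms ar E n t)"
definition n_directed_distributive where
  "n_directed_distributive ar E n \<longleftrightarrow> (\<exists>t. directed_jonsson_terms ar E n t)"
definition specular_n_distributive where
  "specular_n_distributive ar E n \<longleftrightarrow> (\<exists>t. jonsson_terms ar E n t \<and> specular ar E n t)"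
definition specular_n_alvin where
  "specular_n_alvin ar E n \<longleftrightarrow> (\<exists>t. alvin_terms ar E n t \<and> specular ar E n t)"
definition specular_n_directed_distributive where
  "specular_n_directed_distributive ar E n \<longleftrightarrow> (\<exists>t. directed_jonsson_terms ar E n t \<and> specular ar E n t)"

end

theory Submission
  imports Defs "HOL-Library.FuncSet"
begin

(* Fix n >= 2 and a cut function kappa with kappa h c in {h - 1, h}. On the chain
   B = {0, ..., n - 1} let t_h(x, y, z) be kappa h (y = z) clamped into [x, z] when x <= z,
   and t_(n-h)(z, y, x) otherwise; on the two-element algebra C let t_0 = x, t_n = z and
   t_h = x | z in between, corrected at h = 1 and h = n - 1. The variety generated by the
   finite algebra B x C is locally finite, the t_h are specular by construction, and the
   parity pattern of kappa makes them Jonsson, alvin or directed Jonsson terms.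

   Conversely, {((u, w), c). c | |u - w| <= 1} is a subuniverse of B x B x C. A term with
   t(x, y, x) = x takes the value False at (False, True, False) in C, so t(0, 0, n - 1) and
   t(0, n - 1, n - 1) differ by at most 1 in B. Both values go from 0 to n - 1 along a chain
   of Jonsson terms t_0, ..., t_(n-1), but every step keeps one of them fixed: after h steps
   both are at most h, and the last step leaves one of them at most n - 2. For directed
   Jonsson terms the first value of t_(h+1) is the second value of t_h, with the same effect. *)

section \<open>Equational theories of algebras\<close>

fun eval_trm :: "('f \<Rightarrow> 'a list \<Rightarrow> 'a) \<Rightarrow> (nat \<Rightarrow> 'a) \<Rightarrow> 'f trm \<Rightarrow> 'a" where
  "eval_trm I v (Var k) = v k"
| "eval_trm I v (Fn f ts) = I f (map (eval_trm I v) ts)"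

lemma eval_trm_subst: "eval_trm I v (subst \<sigma> t) = eval_trm I (\<lambda>k. eval_trm I v (\<sigma> k)) t"
  by (induction t) (simp_all cong: map_cong)

lemma eval_trm_cong: "(\<And>k. k \<in> vars t \<Longrightarrow> v k = w k) \<Longrightarrow> eval_trm I v t = eval_trm I w t"
proof (induction t)
  case (Fn f ts)
  then have "map (eval_trm I v) ts = map (eval_trm I w) ts" by auto
  then show ?case by (simp only: eval_trm.simps)
qed simp

lemma eval_trm_app3_Var:
  assumes "vars t \<subseteq> {0, 1, 2}" "w 0 = v i" "w 1 = v j" "w 2 = v l"
  shows "eval_trm I v (app3 t (Var i) (Var j) (Var l)) = eval_trm I w t"
  unfolding app3_def eval_trm_subst using assms by (intro eval_trm_cong) auto

definition subuniverse :: "('f \<Rightarrow> nat) \<Rightarrow> 'a set \<Rightarrow> ('f \<Rightarrow> 'a list \<Rightarrow> 'a) \<Rightarrow> bool" where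
  "subuniverse ar A I \<longleftrightarrow> (\<forall>f xs. length xs = ar f \<longrightarrow> set xs \<subseteq> A \<longrightarrow> I f xs \<in> A)"

lemma eval_trm_in_subuniverse:
  assumes "subuniverse ar A I" "wf_trm ar t" "\<And>k. k \<in> vars t \<Longrightarrow> v k \<in> A"
  shows "eval_trm I v t \<in> A"
  using assms(2,3)
proof (induction rule: wf_trm.induct)
  case (wf_fn ts f)
  then have "set (map (eval_trm I v) ts) \<subseteq> A" by auto
  with assms(1) wf_fn.hyps(1) show ?case by (simp add: subuniverse_def)
qed simp

definition holds_in :: "'a set \<Rightarrow> ('f \<Rightarrow> 'a list \<Rightarrow> 'a) \<Rightarrow> 'f trm \<Rightarrow> 'f trm \<Rightarrow> bool" where
  "holds_in A I s t \<longleftrightarrow> (\<forall>v. range v \<subseteq> A \<longrightarrow> eval_trm I v s = eval_trm I v t)"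

lemma eqc_holds_in:
  assumes "eqc ar E s t" "subuniverse ar A I" "\<And>s t. (s, t) \<in> E \<Longrightarrow> holds_in A I s t"
  shows "holds_in A I s t"
  using assms(1)
proof (induction rule: eqc.induct)
  case (eqc_ax s t)
  then show ?case by (rule assms(3))
next
  case (eqc_subst s t \<sigma>)
  have "range (\<lambda>k. eval_trm I v (\<sigma> k)) \<subseteq> A" if "range v \<subseteq> A" for v
    using that eqc_subst.hyps(2) eval_trm_in_subuniverse[OF assms(2)] by blast
  with eqc_subst.IH show ?case by (simp add: holds_in_def eval_trm_subst)
next
  case (eqc_cong ss f ts)
  then have "map (eval_trm I v) ss = map (eval_trm I v) ts" if "range v \<subseteq> A" for v
    using that by (intro nth_equalityI) (auto simp: holds_in_def)
  then show ?case by (simp add: holds_in_def)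
qed (simp_all add: holds_in_def)

definition identities ::
  "('f \<Rightarrow> nat) \<Rightarrow> 'a set \<Rightarrow> ('f \<Rightarrow> 'a list \<Rightarrow> 'a) \<Rightarrow> ('f trm \<times> 'f trm) set" where
  "identities ar A I = {(s, t). wf_trm ar s \<and> wf_trm ar t \<and> holds_in A I s t}"

lemma variety_identities: "variety ar (identities ar A I)"
  by (auto simp: variety_def identities_def)

lemma eqc_identities_iff:
  assumes "subuniverse ar A I" "wf_trm ar s" "wf_trm ar t"
  shows "eqc ar (identities ar A I) s t \<longleftrightarrow> holds_in A I s t"
proof
  show "eqc ar (identities ar A I) s t \<Longrightarrow> holds_in A I s t"
    by (erule eqc_holds_in[OF _ assms(1)]) (simp add: identities_def)
  show "holds_in A I s t \<Longrightarrow> eqc ar (identities ar A I) s t"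
    using assms(2,3) by (intro eqc_ax) (simp add: identities_def)
qed

lemma locally_finite_identities:
  assumes "finite A" "A \<noteq> {}" "subuniverse ar A I"
  shows "locally_finite ar (identities ar A I)"
  unfolding locally_finite_def
proof
  fix k
  let ?T = "{t. wf_trm ar t \<and> vars t \<subseteq> {..<k}}"
  let ?X = "{xs. set xs \<subseteq> A \<and> length xs = k}"
  let ?class = "\<lambda>t. {s. wf_trm ar s \<and> vars s \<subseteq> {..<k} \<and> eqc ar (identities ar A I) s t}"
  obtain a where a: "a \<in> A" using assms(2) by blast
  define val where "val xs i = (if i < k then xs ! i else a)" for xs i
  define table where "table t = (\<lambda>xs\<in>?X. eval_trm I (val xs) t)" for t
  have val_range: "range (val xs) \<subseteq> A" if "xs \<in> ?X" for xs
    using that a by (auto simp: val_def)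
  have holds_iff_table: "holds_in A I s t \<longleftrightarrow> table s = table t" if "s \<in> ?T" "t \<in> ?T" for s t
  proof
    assume "holds_in A I s t"
    then show "table s = table t"
      using val_range unfolding table_def holds_in_def by (intro restrict_ext) blast
  next
    assume eq: "table s = table t"
    show "holds_in A I s t" unfolding holds_in_def
    proof (intro allI impI)
      fix v :: "nat \<Rightarrow> _" assume "range v \<subseteq> A"
      then have xs: "map v [0..<k] \<in> ?X" by auto
      have local: "eval_trm I v u = eval_trm I (val (map v [0..<k])) u" if "u \<in> ?T" for u
        using that by (intro eval_trm_cong) (auto simp: val_def)
      show "eval_trm I v s = eval_trm I v t"
        using fun_cong[OF eq, of "map v [0..<k]"] xs local[OF \<open>s \<in> ?T\<close>] local[OF \<open>t \<in> ?T\<close>]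
        by (simp add: table_def)
    qed
  qed
  have "table ` ?T \<subseteq> (\<Pi>\<^sub>E xs\<in>?X. A)"
  proof (rule image_subsetI)
    fix t assume "t \<in> ?T"
    then have "eval_trm I (val xs) t \<in> A" if "xs \<in> ?X" for xs
      using eval_trm_in_subuniverse[OF assms(3)] val_range[OF that] by blast
    then show "table t \<in> (\<Pi>\<^sub>E xs\<in>?X. A)" by (simp add: table_def)
  qed
  moreover have "finite (\<Pi>\<^sub>E xs\<in>?X. A)"
    using assms(1) by (simp add: finite_PiE finite_lists_length_eq)
  ultimately have "finite (table ` ?T)" by (rule finite_subset)
  moreover have "?class t = {s \<in> ?T. table s = table t}" if "t \<in> ?T" for t
  proof -
    have "s \<in> ?class t \<longleftrightarrow> s \<in> ?T \<and> table s = table t" for s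
      using that holds_iff_table[of s t] eqc_identities_iff[OF assms(3), of s t] by blast
    then show ?thesis by blast
  qed
  then have "?class ` ?T = (\<lambda>\<tau>. {s \<in> ?T. table s = \<tau>}) ` table ` ?T"
    unfolding image_image by (rule image_cong[OF refl])
  ultimately show "finite (?class ` ?T)" by simp
qed

definition prod_interp ::
  "('f \<Rightarrow> 'a list \<Rightarrow> 'a) \<Rightarrow> ('f \<Rightarrow> 'b list \<Rightarrow> 'b) \<Rightarrow> 'f \<Rightarrow> ('a \<times> 'b) list \<Rightarrow> 'a \<times> 'b" where
  "prod_interp I J f xs = (I f (map fst xs), J f (map snd xs))"

lemma eval_trm_prod_interp:
  "eval_trm (prod_interp I J) v t = (eval_trm I (fst \<circ> v) t, eval_trm J (snd \<circ> v) t)"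
  by (induction t) (simp_all add: prod_interp_def comp_def cong: map_cong)

lemma subuniverse_prod_interp:
  assumes "subuniverse ar A I" "subuniverse ar B J"
  shows "subuniverse ar (A \<times> B) (prod_interp I J)"
  unfolding subuniverse_def prod_interp_def
proof (intro allI impI)
  fix f xs
  assume "length xs = ar f" "set xs \<subseteq> A \<times> B"
  then have "length (map fst xs) = ar f" "set (map fst xs) \<subseteq> A"
    "length (map snd xs) = ar f" "set (map snd xs) \<subseteq> B" by auto
  with assms show "(I f (map fst xs), J f (map snd xs)) \<in> A \<times> B"
    by (simp add: subuniverse_def)
qed

lemma holds_in_prod_interp:
  assumes "holds_in A I s t" "holds_in B J s t"
  shows "holds_in (A \<times> B) (prod_interp I J) s t"
  unfolding holds_in_def eval_trm_prod_interp
proof (intro allI impI)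
  fix v :: "nat \<Rightarrow> _"
  assume "range v \<subseteq> A \<times> B"
  then have "range (fst \<circ> v) \<subseteq> A" "range (snd \<circ> v) \<subseteq> B" by auto
  with assms show "(eval_trm I (fst \<circ> v) s, eval_trm J (snd \<circ> v) s) =
      (eval_trm I (fst \<circ> v) t, eval_trm J (snd \<circ> v) t)"
    by (simp add: holds_in_def)
qed

lemma alternating_chain_bound:
  fixes L R :: "nat \<Rightarrow> int"
  assumes "L 0 \<le> 0" "R 0 \<le> 0" "\<And>h. h \<le> M \<Longrightarrow> \<bar>L h - R h\<bar> \<le> 1"
    and "\<And>h. h < M \<Longrightarrow> L (Suc h) = L h \<or> R (Suc h) = R h"
    and "0 < h" "h \<le> M"
  shows "L h < int h \<or> R h < int h"
proof -
  have below: "L h \<le> int h \<and> R h \<le> int h" if "h \<le> M" for h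
    using that
  proof (induction h)
    case (Suc h)
    then show ?case using assms(3)[of "Suc h"] assms(4)[of h] by force
  qed (use assms(1,2) in simp)
  obtain h' where "h = Suc h'" using \<open>0 < h\<close> gr0_implies_Suc by blast
  then show ?thesis using below[of h'] assms(4)[of h'] \<open>h \<le> M\<close> by auto
qed

lemma directed_chain_bound:
  fixes L R :: "nat \<Rightarrow> int"
  assumes "R 0 \<le> 0" "\<And>h. h \<le> M \<Longrightarrow> R h \<le> L h + 1" "\<And>h. h < M \<Longrightarrow> L (Suc h) = R h"
    and "0 < h" "h \<le> M"
  shows "L h < int h"
proof -
  have below: "R h \<le> int h" if "h \<le> M" for h
    using that
  proof (induction h)
    case (Suc h)
    then show ?case using assms(2)[of "Suc h"] assms(3)[of h] by force
  qed (use assms(1) in simp)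
  obtain h' where "h = Suc h'" using \<open>0 < h\<close> gr0_implies_Suc by blast
  then show ?thesis using below[of h'] assms(3)[of h'] \<open>h \<le> M\<close> by auto
qed

lemma clamp_lipschitz:
  "\<bar>k - k'\<bar> \<le> 1 \<Longrightarrow> \<bar>x - x'\<bar> \<le> 1 \<Longrightarrow> \<bar>z - z'\<bar> \<le> 1 \<Longrightarrow>
   \<bar>max x (min k z) - max x' (min k' z')\<bar> \<le> (1::int)"
  by (simp add: max_def min_def abs_if split: if_splits)

lemma clamp_reversed:
  "x \<le> z \<Longrightarrow> z' < x' \<Longrightarrow> \<bar>x - x'\<bar> \<le> 1 \<Longrightarrow> \<bar>z - z'\<bar> \<le> 1 \<Longrightarrow>
   \<bar>max x (min k z) - max z' (min k' x')\<bar> \<le> (1::int)"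
  by (simp add: max_def min_def abs_if split: if_splits)

section \<open>Cut algebras\<close>

abbreviation ar3 :: "nat \<Rightarrow> nat" where
  "ar3 \<equiv> \<lambda>_. 3"

definition op_term :: "nat \<Rightarrow> nat trm" where
  "op_term h = Fn h [vX, vY, vZ]"

(* b = True gives the two-element algebra for Jonsson and directed Jonsson terms,
   b = False the one for alvin terms. *)
locale cut_algebra =
  fixes \<kappa> :: "nat \<Rightarrow> bool \<Rightarrow> int" and b :: bool and n :: nat
  assumes cut_lower: "int h - 1 \<le> \<kappa> h c" and cut_upper: "\<kappa> h c \<le> int h"
    and two_le_n: "2 \<le> n"
begin

definition B_op :: "nat \<Rightarrow> int \<Rightarrow> int \<Rightarrow> int \<Rightarrow> int" where
  "B_op h x y z =
     (if x \<le> z then max x (min (\<kappa> h (y = z)) z) else max z (min (\<kappa> (n - h) (y = x)) x))"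

definition C_op :: "nat \<Rightarrow> bool \<Rightarrow> bool \<Rightarrow> bool \<Rightarrow> bool" where
  "C_op h x y z = (if h = 0 then x else if h = n then z else
     (x \<or> z) \<and> (h = 1 \<longrightarrow> x \<or> (y = b) \<and> z) \<and> (h = n - 1 \<longrightarrow> z \<or> (y = b) \<and> x))"

definition B_carrier :: "int set" where
  "B_carrier = {0..int n - 1}"

definition B_interp :: "nat \<Rightarrow> int list \<Rightarrow> int" where
  "B_interp h xs = B_op h (xs ! 0) (xs ! 1) (xs ! 2)"

definition C_interp :: "nat \<Rightarrow> bool list \<Rightarrow> bool" where
  "C_interp h xs = C_op h (xs ! 0) (xs ! 1) (xs ! 2)"

definition E :: "(nat trm \<times> nat trm) set" where
  "E = identities ar3 (B_carrier \<times> UNIV) (prod_interp B_interp C_interp)"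

lemma cut_diff: "\<bar>\<kappa> h c - \<kappa> h c'\<bar> \<le> 1"
  using cut_lower[of h c] cut_upper[of h c] cut_lower[of h c'] cut_upper[of h c'] by linarith

lemma B_op_between: "B_op h x y z \<ge> min x z \<and> B_op h x y z \<le> max x z"
  by (auto simp: B_op_def)

lemma B_op_idem: "B_op h x y x = x"
  by (simp add: B_op_def)

lemma B_op_mirror: "h \<le> n \<Longrightarrow> B_op h x y z = B_op (n - h) z y x"
  by (auto simp: B_op_def)

lemma B_op_0: "x \<in> B_carrier \<Longrightarrow> B_op 0 x y z = x"
  using cut_upper[of 0 "y = z"] cut_lower[of n "y = x"] by (auto simp: B_op_def B_carrier_def)

lemma B_op_n: "z \<in> B_carrier \<Longrightarrow> B_op n x y z = z"
  using B_op_0[of z y x] B_op_mirror[of n x y z] by simp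

lemma B_op_eqI:
  assumes "x < z \<Longrightarrow> \<kappa> h (y = z) = \<kappa> h' (y' = z)" "z < x \<Longrightarrow> \<kappa> (n - h) (y = x) = \<kappa> (n - h') (y' = x)"
  shows "B_op h x y z = B_op h' x y' z"
  using assms by (cases x z rule: linorder_cases) (auto simp: B_op_def)

lemma B_op_lipschitz:
  assumes "\<bar>x - x'\<bar> \<le> 1" "\<bar>z - z'\<bar> \<le> 1"
  shows "\<bar>B_op h x y z - B_op h x' y' z'\<bar> \<le> 1"
proof (cases "x \<le> z"; cases "x' \<le> z'")
  assume "x \<le> z" "x' \<le> z'"
  then show ?thesis unfolding B_op_def using clamp_lipschitz[OF cut_diff assms] by simp
next
  assume "x \<le> z" "\<not> x' \<le> z'"
  then show ?thesis unfolding B_op_def using clamp_reversed[of x z z' x'] assms by simp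
next
  assume "\<not> x \<le> z" "x' \<le> z'"
  then show ?thesis unfolding B_op_def using clamp_reversed[of x' z' z x] assms
    by (simp add: abs_minus_commute)
next
  assume "\<not> x \<le> z" "\<not> x' \<le> z'"
  then show ?thesis unfolding B_op_def using clamp_lipschitz[OF cut_diff assms(2,1)] by simp
qed

lemma B_op_shape_first:
  assumes "h \<le> 1" "x \<in> B_carrier" "z \<in> B_carrier"
  shows "B_op h x y z = x \<or> (x = 0 \<and> B_op h x y z \<in> {0..1}) \<or>
    (x = int n - 1 \<and> B_op h x y z \<in> {int n - 2..int n - 1})"
proof (cases "x \<le> z")
  case True
  have "\<kappa> h (y = z) \<le> 1" using cut_upper[of h "y = z"] assms(1) by linarith
  then show ?thesis using True assms(2,3) by (auto simp: B_op_def B_carrier_def max_def min_def)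
next
  case False
  have "int n - 2 \<le> \<kappa> (n - h) (y = x)"
    using cut_lower[of "n - h" "y = x"] assms(1) two_le_n by (simp add: of_nat_diff)
  then show ?thesis using False assms(2,3) by (auto simp: B_op_def B_carrier_def max_def min_def)
qed

lemma B_op_near_first:
  assumes "h \<le> 1" "x \<in> B_carrier" "z \<in> B_carrier" "x' \<in> B_carrier" "z' \<in> B_carrier" "\<bar>x - x'\<bar> \<le> 1"
  shows "\<bar>B_op h x y z - B_op h x' y' z'\<bar> \<le> 1"
  using B_op_shape_first[of h x z y] B_op_shape_first[of h x' z' y'] assms two_le_n
  unfolding B_carrier_def atLeastAtMost_iff by (elim disjE conjE) linarith+

lemma B_op_near_last:
  assumes "n - 1 \<le> h" "h \<le> n" "x \<in> B_carrier" "z \<in> B_carrier" "x' \<in> B_carrier" "z' \<in> B_carrier"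
    "\<bar>z - z'\<bar> \<le> 1"
  shows "\<bar>B_op h x y z - B_op h x' y' z'\<bar> \<le> 1"
  using B_op_near_first[of "n - h" z x z' x' y y'] assms
    B_op_mirror[of h x y z] B_op_mirror[of h x' y' z']
  by simp

lemma C_op_idem: "C_op h x y x = x"
  by (auto simp: C_op_def)

lemma C_op_mirror: "h \<le> n \<Longrightarrow> C_op h x y z = C_op (n - h) z y x"
  using two_le_n by (auto simp: C_op_def)

lemma C_op_falseD:
  "\<not> C_op h x y z \<Longrightarrow> (\<not> x \<and> \<not> z) \<or> (h \<le> 1 \<and> \<not> x) \<or> (n - 1 \<le> h \<and> h \<le> n \<and> \<not> z)"
  unfolding C_op_def by (auto split: if_splits)

lemma subuniverse_B: "subuniverse ar3 B_carrier B_interp"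
  unfolding subuniverse_def B_interp_def
proof (intro allI impI)
  fix h and xs :: "int list"
  assume "length xs = 3" "set xs \<subseteq> B_carrier"
  then have "xs ! 0 \<in> B_carrier" "xs ! 2 \<in> B_carrier" by auto
  then show "B_op h (xs ! 0) (xs ! 1) (xs ! 2) \<in> B_carrier"
    using B_op_between[of "xs ! 0" "xs ! 2" h "xs ! 1"] by (auto simp: B_carrier_def)
qed

lemma subuniverse_B_times_C: "subuniverse ar3 (B_carrier \<times> UNIV) (prod_interp B_interp C_interp)"
  using subuniverse_B by (rule subuniverse_prod_interp) (simp add: subuniverse_def)

lemma variety_E: "variety ar3 E"
  by (simp add: E_def variety_identities)

lemma locally_finite_E: "locally_finite ar3 E"
proof -
  have "0 \<in> B_carrier" using two_le_n by (simp add: B_carrier_def)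
  then show ?thesis
    unfolding E_def using subuniverse_B_times_C
    by (intro locally_finite_identities) (auto simp: B_carrier_def)
qed

lemma eqc_EI:
  assumes "wf_trm ar3 s" "wf_trm ar3 t"
    and "holds_in B_carrier B_interp s t" "holds_in UNIV C_interp s t"
  shows "eqc ar3 E s t"
  unfolding E_def using assms by (intro eqc_ax) (simp add: identities_def holds_in_prod_interp)

lemma eqc_E_evalD:
  assumes "eqc ar3 E s t" "range v \<subseteq> B_carrier"
  shows "eval_trm B_interp v s = eval_trm B_interp v t"
    and "eval_trm C_interp c s = eval_trm C_interp c t"
proof -
  have "holds_in (B_carrier \<times> UNIV) (prod_interp B_interp C_interp) s t"
    using assms(1) subuniverse_B_times_C unfolding E_def
    by (rule eqc_holds_in) (simp add: identities_def)
  moreover have "range (\<lambda>k. (v k, c k)) \<subseteq> B_carrier \<times> UNIV" using assms(2) by auto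
  ultimately have "eval_trm (prod_interp B_interp C_interp) (\<lambda>k. (v k, c k)) s =
      eval_trm (prod_interp B_interp C_interp) (\<lambda>k. (v k, c k)) t"
    unfolding holds_in_def by blast
  then show "eval_trm B_interp v s = eval_trm B_interp v t"
    and "eval_trm C_interp c s = eval_trm C_interp c t"
    by (simp_all add: eval_trm_prod_interp comp_def)
qed

definition near :: "((int \<times> int) \<times> bool) set" where
  "near = {((u, w), c). u \<in> B_carrier \<and> w \<in> B_carrier \<and> (c \<or> \<bar>u - w\<bar> \<le> 1)}"

lemma subuniverse_near:
  "subuniverse ar3 near (prod_interp (prod_interp B_interp B_interp) C_interp)"
  unfolding subuniverse_def
proof (intro allI impI)
  fix h and xs :: "((int \<times> int) \<times> bool) list"
  assume "length xs = ar3 h" "set xs \<subseteq> near"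
  then obtain u1 w1 c1 u2 w2 c2 u3 w3 c3
    where xs: "xs = [((u1, w1), c1), ((u2, w2), c2), ((u3, w3), c3)]"
    and near: "((u1, w1), c1) \<in> near" "((u3, w3), c3) \<in> near"
    by (auto simp: numeral_3_eq_3 length_Suc_conv)
  then have carrier: "u1 \<in> B_carrier" "w1 \<in> B_carrier" "u3 \<in> B_carrier" "w3 \<in> B_carrier"
    by (auto simp: near_def)
  have "B_op h u1 u2 u3 \<in> B_carrier" "B_op h w1 w2 w3 \<in> B_carrier"
    using carrier B_op_between[of u1 u3 h u2] B_op_between[of w1 w3 h w2]
    by (auto simp: B_carrier_def)
  moreover have "\<bar>B_op h u1 u2 u3 - B_op h w1 w2 w3\<bar> \<le> 1" if "\<not> C_op h c1 c2 c3"
  proof -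
    have close: "\<not> c1 \<Longrightarrow> \<bar>u1 - w1\<bar> \<le> 1" "\<not> c3 \<Longrightarrow> \<bar>u3 - w3\<bar> \<le> 1"
      using near by (auto simp: near_def)
    from C_op_falseD[OF that] consider "\<not> c1" "\<not> c3" | "h \<le> 1" "\<not> c1" | "n - 1 \<le> h" "h \<le> n" "\<not> c3"
      by blast
    then show ?thesis
    proof cases
      case 1
      then show ?thesis using close by (intro B_op_lipschitz) auto
    next
      case 2
      then show ?thesis using close carrier by (intro B_op_near_first) auto
    next
      case 3
      then show ?thesis using close carrier by (intro B_op_near_last) auto
    qed
  qed
  ultimately show "prod_interp (prod_interp B_interp B_interp) C_interp h xs \<in> near"
    by (auto simp: xs near_def prod_interp_def B_interp_def C_interp_def)
qed

lemma near_eval_trm: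
  assumes "wf_trm ar3 t" "\<And>k. ((v k, w k), c k) \<in> near"
  shows "((eval_trm B_interp v t, eval_trm B_interp w t), eval_trm C_interp c t) \<in> near"
  using eval_trm_in_subuniverse[OF subuniverse_near assms(1), of "\<lambda>k. ((v k, w k), c k)"] assms(2)
  by (simp add: eval_trm_prod_interp comp_def)

(* The middle argument is z or x, as in the identities for (x, z, z) and (x, x, z);
   for z < x the step is read off the mirror image t_(n-h). *)
lemma B_op_step:
  assumes "\<kappa> h c = \<kappa> (Suc h) c'" "\<kappa> (n - Suc h) (\<not> c') = \<kappa> (Suc (n - Suc h)) (\<not> c)" "h < n"
  shows "B_op h x (if c then z else x) z = B_op (Suc h) x (if c' then z else x) z"
proof (rule B_op_eqI)
  show "\<kappa> (n - h) ((if c then z else x) = x) = \<kappa> (n - Suc h) ((if c' then z else x) = x)" if "z < x"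
    using that assms(2,3) by (auto simp: Suc_diff_Suc)
qed (use assms(1) in auto)

lemma C_op_alternating_step:
  assumes "even n" "h < n"
  shows "even h = b \<Longrightarrow> C_op h x x z = C_op (Suc h) x x z"
    and "odd h = b \<Longrightarrow> C_op h x z z = C_op (Suc h) x z z"
proof -
  have "even h \<Longrightarrow> h \<noteq> n - 1 \<and> Suc h \<noteq> n" "odd h \<Longrightarrow> Suc h \<noteq> n - 1"
    using assms by presburger+
  then show "even h = b \<Longrightarrow> C_op h x x z = C_op (Suc h) x x z"
    and "odd h = b \<Longrightarrow> C_op h x z z = C_op (Suc h) x z z"
    using assms(2) two_le_n unfolding C_op_def by auto
qed

lemma C_op_directed_step: "b \<Longrightarrow> h < n \<Longrightarrow> C_op h x z z = C_op (Suc h) x x z"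
  using two_le_n unfolding C_op_def by auto

lemma eqc_E_op_termI:
  assumes "\<And>v. range v \<subseteq> B_carrier \<Longrightarrow> B_op h (v i) (v j) (v l) = B_op h' (v i') (v j') (v l')"
    and "\<And>c. C_op h (c i) (c j) (c l) = C_op h' (c i') (c j') (c l')"
  shows "eqc ar3 E (app3 (op_term h) (Var i) (Var j) (Var l))
                   (app3 (op_term h') (Var i') (Var j') (Var l'))"
  using assms
  by (intro eqc_EI)
    (auto simp: app3_def op_term_def holds_in_def B_interp_def C_interp_def intro!: wf_trm.intros)

lemma op_term_app3: "op_term h = app3 (op_term h) vX vY vZ"
  by (simp add: app3_def op_term_def)

lemma base_terms_op_term: "base_terms ar3 E n op_term"
  unfolding base_terms_def
proof (intro conjI allI impI)
  show "ternary ar3 (op_term h)" for h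
    by (auto simp: ternary_def op_term_def intro!: wf_trm.intros)
  have "B_op 0 (v 0) (v 1) (v 2) = v 0" "B_op n (v 0) (v 1) (v 2) = v 2"
    if "range v \<subseteq> B_carrier" for v :: "nat \<Rightarrow> int"
    using that by (auto intro!: B_op_0 B_op_n)
  then show "eqc ar3 E (op_term 0) vX" "eqc ar3 E (op_term n) vZ"
    using two_le_n by (auto simp: op_term_def holds_in_def B_interp_def C_interp_def C_op_def
        intro!: eqc_EI wf_trm.intros)
  show "eqc ar3 E (app3 (op_term h) vX vY vX) vX" for h
    by (auto simp: app3_def op_term_def holds_in_def B_interp_def C_interp_def B_op_idem C_op_idem
        intro!: eqc_EI wf_trm.intros)
qed

lemma specular_op_term: "specular ar3 E n op_term"
  unfolding specular_def
proof (intro allI impI)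
  fix i assume "i \<le> n"
  then show "eqc ar3 E (op_term i) (app3 (op_term (n - i)) vZ vY vX)"
    using B_op_mirror[of i] C_op_mirror[of i] by (subst op_term_app3) (intro eqc_E_op_termI; simp)
qed

lemma alternating_steps_op_term:
  assumes "even n" "h < n"
    and "\<And>h. even h = b \<Longrightarrow> \<kappa> h False = \<kappa> (Suc h) False"
    and "\<And>h. odd h = b \<Longrightarrow> \<kappa> h True = \<kappa> (Suc h) True"
  shows "even h = b \<Longrightarrow> eqc ar3 E (app3 (op_term h) vX vX vZ) (app3 (op_term (Suc h)) vX vX vZ)"
    and "odd h = b \<Longrightarrow> eqc ar3 E (app3 (op_term h) vX vZ vZ) (app3 (op_term (Suc h)) vX vZ vZ)"
proof -
  have parity: "odd (n - Suc h) \<longleftrightarrow> even h" "even (n - Suc h) \<longleftrightarrow> odd h"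
    using assms(1,2) by presburger+
  show "eqc ar3 E (app3 (op_term h) vX vX vZ) (app3 (op_term (Suc h)) vX vX vZ)" if "even h = b"
  proof (rule eqc_E_op_termI)
    have "\<kappa> (n - Suc h) True = \<kappa> (Suc (n - Suc h)) True"
      by (rule assms(4)) (use parity that in blast)
    then show "B_op h (v 0) (v 0) (v 2) = B_op (Suc h) (v 0) (v 0) (v 2)" for v :: "nat \<Rightarrow> int"
      using B_op_step[OF assms(3)[OF that] _ assms(2)] by simp
    show "C_op h (c 0) (c 0) (c 2) = C_op (Suc h) (c 0) (c 0) (c 2)" for c
      using C_op_alternating_step(1)[OF assms(1,2) that] .
  qed
  show "eqc ar3 E (app3 (op_term h) vX vZ vZ) (app3 (op_term (Suc h)) vX vZ vZ)" if "odd h = b"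
  proof (rule eqc_E_op_termI)
    have "\<kappa> (n - Suc h) False = \<kappa> (Suc (n - Suc h)) False"
      by (rule assms(3)) (use parity that in blast)
    then show "B_op h (v 0) (v 2) (v 2) = B_op (Suc h) (v 0) (v 2) (v 2)" for v :: "nat \<Rightarrow> int"
      using B_op_step[OF assms(4)[OF that] _ assms(2)] by simp
    show "C_op h (c 0) (c 2) (c 2) = C_op (Suc h) (c 0) (c 2) (c 2)" for c
      using C_op_alternating_step(2)[OF assms(1,2) that] .
  qed
qed

lemma jonsson_terms_op_term:
  assumes "b" "even n"
    and "\<And>h. even h \<Longrightarrow> \<kappa> h False = \<kappa> (Suc h) False"
    and "\<And>h. odd h \<Longrightarrow> \<kappa> h True = \<kappa> (Suc h) True"
  shows "jonsson_terms ar3 E n op_term"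
  unfolding jonsson_terms_def
proof (intro conjI allI impI base_terms_op_term)
  fix h assume h: "h < n"
  show "eqc ar3 E (app3 (op_term h) vX vX vZ) (app3 (op_term (Suc h)) vX vX vZ)" if "even h"
    by (rule alternating_steps_op_term(1)[OF assms(2) h]) (use assms that in auto)
  show "eqc ar3 E (app3 (op_term h) vX vZ vZ) (app3 (op_term (Suc h)) vX vZ vZ)" if "odd h"
    by (rule alternating_steps_op_term(2)[OF assms(2) h]) (use assms that in auto)
qed

lemma alvin_terms_op_term:
  assumes "\<not> b" "even n"
    and "\<And>h. odd h \<Longrightarrow> \<kappa> h False = \<kappa> (Suc h) False"
    and "\<And>h. even h \<Longrightarrow> \<kappa> h True = \<kappa> (Suc h) True"
  shows "alvin_terms ar3 E n op_term"
  unfolding alvin_terms_def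
proof (intro conjI allI impI base_terms_op_term)
  fix h assume h: "h < n"
  show "eqc ar3 E (app3 (op_term h) vX vX vZ) (app3 (op_term (Suc h)) vX vX vZ)" if "odd h"
    by (rule alternating_steps_op_term(1)[OF assms(2) h]) (use assms that in auto)
  show "eqc ar3 E (app3 (op_term h) vX vZ vZ) (app3 (op_term (Suc h)) vX vZ vZ)" if "even h"
    by (rule alternating_steps_op_term(2)[OF assms(2) h]) (use assms that in auto)
qed

lemma directed_jonsson_terms_op_term:
  assumes "b" "\<And>h. \<kappa> h True = \<kappa> (Suc h) False"
  shows "directed_jonsson_terms ar3 E n op_term"
  unfolding directed_jonsson_terms_def
proof (intro conjI allI impI base_terms_op_term)
  fix h assume h: "h < n"
  show "eqc ar3 E (app3 (op_term h) vX vZ vZ) (app3 (op_term (Suc h)) vX vX vZ)"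
  proof (rule eqc_E_op_termI)
    show "B_op h (v 0) (v 2) (v 2) = B_op (Suc h) (v 0) (v 0) (v 2)" for v
      using B_op_step[of h True False] assms(2)[of h] assms(2)[of "n - Suc h"] h by simp
    show "C_op h (c 0) (c 2) (c 2) = C_op (Suc h) (c 0) (c 0) (c 2)" for c
      using C_op_directed_step[OF assms(1) h] by simp
  qed
qed

section \<open>Lower bounds\<close>

definition lo_val :: "nat \<Rightarrow> int" where
  "lo_val = (\<lambda>_. 0)(2 := int n - 1)"

definition hi_val :: "nat \<Rightarrow> int" where
  "hi_val = (\<lambda>_. 0)(1 := int n - 1, 2 := int n - 1)"

definition mid_val :: "nat \<Rightarrow> bool" where
  "mid_val = (\<lambda>_. False)(1 := True)"

lemma lo_val_range: "range lo_val \<subseteq> B_carrier"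
  and hi_val_range: "range hi_val \<subseteq> B_carrier"
  using two_le_n by (auto simp: lo_val_def hi_val_def B_carrier_def)

lemma eval_trm_app3_lo_hi:
  assumes "vars t \<subseteq> {0, 1, 2}"
  shows "eval_trm I lo_val (app3 t vX vX vZ) = eval_trm I lo_val t"
    and "eval_trm I hi_val (app3 t vX vZ vZ) = eval_trm I hi_val t"
    and "eval_trm I hi_val (app3 t vX vX vZ) = eval_trm I lo_val t"
  by (rule eval_trm_app3_Var[OF assms]; simp add: lo_val_def hi_val_def)+

lemma base_terms_lo_hi_close:
  assumes "base_terms ar3 E M t" "h \<le> M"
  shows "\<bar>eval_trm B_interp lo_val (t h) - eval_trm B_interp hi_val (t h)\<bar> \<le> 1"
proof -
  have t: "wf_trm ar3 (t h)" "vars (t h) \<subseteq> {0, 1, 2}"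
    using assms by (auto simp: base_terms_def ternary_def)
  have "eqc ar3 E (app3 (t h) vX vY vX) vX"
    using assms by (auto simp: base_terms_def)
  then have "eval_trm C_interp mid_val (app3 (t h) vX vY vX) = mid_val 0"
    using eqc_E_evalD(2)[OF _ lo_val_range] by simp
  moreover have "eval_trm C_interp mid_val (app3 (t h) vX vY vX) = eval_trm C_interp mid_val (t h)"
    by (rule eval_trm_app3_Var[OF t(2)]) (simp_all add: mid_val_def)
  ultimately have "\<not> eval_trm C_interp mid_val (t h)"
    by (simp add: mid_val_def)
  moreover have "((lo_val k, hi_val k), mid_val k) \<in> near" for k
    using two_le_n by (auto simp: near_def lo_val_def hi_val_def mid_val_def B_carrier_def)
  ultimately show ?thesis
    using near_eval_trm[OF t(1)] by (auto simp: near_def)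
qed

lemma base_terms_ends:
  assumes "base_terms ar3 E M t" "range v \<subseteq> B_carrier"
  shows "eval_trm B_interp v (t 0) = v 0" "eval_trm B_interp v (t M) = v 2"
  using eqc_E_evalD(1)[OF _ assms(2), of "t 0" vX] eqc_E_evalD(1)[OF _ assms(2), of "t M" vZ]
    assms(1)
  by (simp_all add: base_terms_def)

lemma not_n_minus_1_distributive: "\<not> n_distributive ar3 E (n - 1)"
proof
  let ?M = "n - 1"
  assume "n_distributive ar3 E ?M"
  then obtain t where t: "jonsson_terms ar3 E ?M t"
    by (auto simp: n_distributive_def)
  then have base: "base_terms ar3 E ?M t"
    by (simp add: jonsson_terms_def)
  have vars: "vars (t h) \<subseteq> {0, 1, 2}" if "h \<le> ?M" for h
    using base that by (simp add: base_terms_def ternary_def)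
  define L where "L h = eval_trm B_interp lo_val (t h)" for h
  define R where "R h = eval_trm B_interp hi_val (t h)" for h
  have step: "L (Suc h) = L h \<or> R (Suc h) = R h" if "h < ?M" for h
  proof (cases "even h")
    case True
    then have "eqc ar3 E (app3 (t h) vX vX vZ) (app3 (t (Suc h)) vX vX vZ)"
      using t that by (simp add: jonsson_terms_def)
    from eqc_E_evalD(1)[OF this lo_val_range] have "L h = L (Suc h)"
      using vars that by (simp add: L_def eval_trm_app3_lo_hi)
    then show ?thesis by simp
  next
    case False
    then have "eqc ar3 E (app3 (t h) vX vZ vZ) (app3 (t (Suc h)) vX vZ vZ)"
      using t that by (simp add: jonsson_terms_def)
    from eqc_E_evalD(1)[OF this hi_val_range] have "R h = R (Suc h)"
      using vars that by (simp add: R_def eval_trm_app3_lo_hi)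
    then show ?thesis by simp
  qed
  have ends: "L 0 = 0" "R 0 = 0" "L ?M = int ?M" "R ?M = int ?M"
    using base_terms_ends[OF base lo_val_range] base_terms_ends[OF base hi_val_range] two_le_n
    by (simp_all add: L_def R_def lo_val_def hi_val_def of_nat_diff)
  have close: "\<bar>L h - R h\<bar> \<le> 1" if "h \<le> ?M" for h
    using base_terms_lo_hi_close[OF base that] by (simp add: L_def R_def)
  have "L ?M < int ?M \<or> R ?M < int ?M"
    by (rule alternating_chain_bound[where L = L and R = R, OF _ _ close step])
      (use two_le_n ends in auto)
  with ends show False by simp
qed

lemma not_n_minus_1_directed_distributive: "\<not> n_directed_distributive ar3 E (n - 1)"
proof
  let ?M = "n - 1"
  assume "n_directed_distributive ar3 E ?M"
  then obtain t where t: "directed_jonsson_terms ar3 E ?M t"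
    by (auto simp: n_directed_distributive_def)
  then have base: "base_terms ar3 E ?M t"
    by (simp add: directed_jonsson_terms_def)
  have vars: "vars (t h) \<subseteq> {0, 1, 2}" if "h \<le> ?M" for h
    using base that by (simp add: base_terms_def ternary_def)
  define L where "L h = eval_trm B_interp lo_val (t h)" for h
  define R where "R h = eval_trm B_interp hi_val (t h)" for h
  have step: "L (Suc h) = R h" if "h < ?M" for h
  proof -
    have "eqc ar3 E (app3 (t h) vX vZ vZ) (app3 (t (Suc h)) vX vX vZ)"
      using t that by (simp add: directed_jonsson_terms_def)
    from eqc_E_evalD(1)[OF this hi_val_range] show ?thesis
      using vars that by (simp add: L_def R_def eval_trm_app3_lo_hi)
  qed
  have ends: "R 0 = 0" "L ?M = int ?M"
    using base_terms_ends[OF base lo_val_range] base_terms_ends[OF base hi_val_range] two_le_n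
    by (simp_all add: L_def R_def lo_val_def hi_val_def of_nat_diff)
  have close: "R h \<le> L h + 1" if "h \<le> ?M" for h
    using base_terms_lo_hi_close[OF base that] by (simp add: L_def R_def)
  have "L ?M < int ?M"
    by (rule directed_chain_bound[where L = L and R = R, OF _ close step])
      (use two_le_n ends in auto)
  with ends show False by simp
qed

end

definition jonsson_cut :: "nat \<Rightarrow> bool \<Rightarrow> int" where
  "jonsson_cut h c = int h - of_bool (odd h \<noteq> c)"

definition alvin_cut :: "nat \<Rightarrow> bool \<Rightarrow> int" where
  "alvin_cut h c = int h - of_bool (odd h = c)"

definition directed_cut :: "nat \<Rightarrow> bool \<Rightarrow> int" where
  "directed_cut h c = int h - of_bool (\<not> c)"

lemma exists_specular_n_distributive_not_n_minus_1_distributive: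
  assumes "2 \<le> n" "even n"
  shows "\<exists>(ar :: nat \<Rightarrow> nat) (E :: (nat trm \<times> nat trm) set).
    variety ar E \<and> locally_finite ar E \<and> specular_n_distributive ar E n \<and>
    \<not> n_distributive ar E (n - 1)"
proof -
  interpret cut_algebra jonsson_cut True n
    using assms(1) by unfold_locales (auto simp: jonsson_cut_def)
  have "jonsson_terms ar3 E n op_term"
    using assms(2) by (intro jonsson_terms_op_term) (auto simp: jonsson_cut_def)
  then show ?thesis
    unfolding specular_n_distributive_def
    by (intro exI[of _ ar3] exI[of _ E])
      (use variety_E locally_finite_E specular_op_term not_n_minus_1_distributive in blast)
qed

lemma exists_specular_n_alvin_not_n_minus_1_distributive:
  assumes "2 \<le> n" "even n"
  shows "\<exists>(ar :: nat \<Rightarrow> nat) (E :: (nat trm \<times> nat trm) set).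
    variety ar E \<and> locally_finite ar E \<and> specular_n_alvin ar E n \<and>
    \<not> n_distributive ar E (n - 1)"
proof -
  interpret cut_algebra alvin_cut False n
    using assms(1) by unfold_locales (auto simp: alvin_cut_def)
  have "alvin_terms ar3 E n op_term"
    using assms(2) by (intro alvin_terms_op_term) (auto simp: alvin_cut_def)
  then show ?thesis
    unfolding specular_n_alvin_def
    by (intro exI[of _ ar3] exI[of _ E])
      (use variety_E locally_finite_E specular_op_term not_n_minus_1_distributive in blast)
qed

lemma exists_specular_n_directed_not_n_minus_1_directed_distributive:
  assumes "2 \<le> n"
  shows "\<exists>(ar :: nat \<Rightarrow> nat) (E :: (nat trm \<times> nat trm) set).
    variety ar E \<and> locally_finite ar E \<and> specular_n_directed_distributive ar E n \<and>
    \<not> n_directed_distributive ar E (n - 1)"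
proof -
  interpret cut_algebra directed_cut True n
    using assms by unfold_locales (auto simp: directed_cut_def)
  have "directed_jonsson_terms ar3 E n op_term"
    by (intro directed_jonsson_terms_op_term) (auto simp: directed_cut_def)
  then show ?thesis
    unfolding specular_n_directed_distributive_def
    by (intro exI[of _ ar3] exI[of _ E])
      (use variety_E locally_finite_E specular_op_term not_n_minus_1_directed_distributive in blast)
qed

theorem corollary6p3:
  shows "(\<forall>n::nat. 2 \<le> n \<and> even n \<longrightarrow>
            (\<exists>(ar :: nat \<Rightarrow> nat) (E :: (nat trm \<times> nat trm) set).
               variety ar E \<and> locally_finite ar E \<and> specular_n_distributive ar E n \<and>
               \<not> n_distributive ar E (n - 1)) \<and>
            (\<exists>(ar :: nat \<Rightarrow> nat) (E :: (nat trm \<times> nat trm) set).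
               variety ar E \<and> locally_finite ar E \<and> specular_n_alvin ar E n \<and>
               \<not> n_distributive ar E (n - 1))) \<and>
         (\<forall>n::nat. 2 \<le> n \<longrightarrow>
            (\<exists>(ar :: nat \<Rightarrow> nat) (E :: (nat trm \<times> nat trm) set).
               variety ar E \<and> locally_finite ar E \<and> specular_n_directed_distributive ar E n \<and>
               \<not> n_directed_distributive ar E (n - 1)))"
  using exists_specular_n_distributive_not_n_minus_1_distributive
    exists_specular_n_alvin_not_n_minus_1_distributive
    exists_specular_n_directed_not_n_minus_1_directed_distributive
  by blast

end
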